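(* Let $x$ be sufficiently large, let $N$ be any integer, and let $y=\lfloor 0.08x\rfloor$. Then there is a residue class $b \bmod P(x)$ such that $$(S_x-b)\cap[-y,y]=\varnothing\quad\text{and}\quad (S_x-N+b)\cap[-y,y]=\varnothing .$$
   Context: $p$ always denotes a prime. For $x\ge 2$, $S_x=\{n\in\mathbb Z:\ n\not\equiv 0 \pmod p \text{ for every prime } p\le x\}$, and $P(x)=\prod_{p\le x}p$. For a set $S\subset\mathbb Z$ and an integer $t$, $S-t=\{s-t:s\in S\}$; since $S_x$ is $P(x)$-periodic, $S_x-b$ depends only on $b\bmod P(x)$. *)

theory Defs
  imports "HOL-Computational_Algebra.Primes" Complex_Main
begin

definition sieved :: "real \<Rightarrow> int set" where
  "sieved x = {n. \<forall>p::nat. prime p \<and> real p \<le> x \<longrightarrow> \<not> (int p dvd n)}"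

definition shift :: "int set \<Rightarrow> int \<Rightarrow> int set" where
  "shift S t = (\<lambda>s. s - t) ` S"

end

theory Submission
  imports Defs "HOL-Number_Theory.Number_Theory" "HOL-Analysis.Harmonic_Numbers" "HOL-Real_Asymp.Real_Asymp"
begin

text \<open>We need \<open>b\<close> such that, for every \<open>|m| \<le> y\<close>, both \<open>m + b\<close> and \<open>m + N - b\<close> have a prime
  factor \<open>p \<le> x\<close>, i.e. \<open>b\<close> is congruent to each of the \<open>4y + 2\<close> targets \<open>-m\<close>, \<open>N + m\<close> modulo
  some such \<open>p\<close>.
  Choosing the residues of \<open>b\<close> modulo the primes \<open>p \<le> z = x powr 0.9\<close> at random leaves on average a
  fraction \<open>\<Prod>(1 - 1/p) \<le> 1 / ln (z + 1)\<close> of the targets uncovered, about \<open>0.32 x / (0.9 ln x)\<close> of them.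
  By the Chinese remainder theorem each of these can be assigned its own prime in \<open>(z, x]\<close>, and
  Chebyshev's bound \<open>\<pi>(x) \<ge> (1/2 - o(1)) x / ln x\<close> provides enough of those since \<open>0.32 / 0.9 < 1/2\<close>.\<close>

section \<open>Chebyshev's lower bound for the number of primes\<close>

definition primes_psi :: "nat \<Rightarrow> real" where
  "primes_psi n = (\<Sum>d\<in>{1..n}. mangoldt d)"

lemma primes_psi_mono: "m \<le> n \<Longrightarrow> primes_psi m \<le> primes_psi n"
  unfolding primes_psi_def by (rule sum_mono2) (auto simp: mangoldt_nonneg)

lemma ln_fact_conv_sum_mangoldt:
  "ln (fact m :: real) = (\<Sum>d\<in>{1..m}. mangoldt d * real (m div d))"
proof (induction m)
  case 0
  then show ?case by simp
next
  case (Suc m)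
  have "ln (fact (Suc m) :: real) = ln (real (Suc m)) + ln (fact m)"
    by (simp add: ln_mult fact_Suc)
  also have "ln (real (Suc m)) = (\<Sum>d | d dvd Suc m. mangoldt d)"
    using mangoldt_sum[of "Suc m", where 'a=real] by simp
  also have "{d. d dvd Suc m} = {d\<in>{1..Suc m}. d dvd Suc m}"
    by (auto simp: dvd_imp_le Suc_le_eq intro: Nat.gr0I)
  also have "(\<Sum>d\<in>{d\<in>{1..Suc m}. d dvd Suc m}. mangoldt d :: real)
      = (\<Sum>d\<in>{1..Suc m}. if d dvd Suc m then mangoldt d else 0)"
    by (rule sum.inter_filter) simp
  also have "ln (fact m) = (\<Sum>d\<in>{1..Suc m}. mangoldt d * real (m div d))"
    using Suc by (simp add: sum.cl_ivl_Suc)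
  also have "(\<Sum>d\<in>{1..Suc m}. if d dvd Suc m then mangoldt d else 0) +
             (\<Sum>d\<in>{1..Suc m}. mangoldt d * real (m div d))
           = (\<Sum>d\<in>{1..Suc m}. mangoldt d * real (Suc m div d))"
    unfolding sum.distrib[symmetric]
    by (intro sum.cong refl) (auto simp: div_Suc algebra_simps dvd_eq_mod_eq_0)
  finally show ?case .
qed

lemma two_mult_div_le: "(2 * n) div d \<le> 2 * (n div d) + (1::nat)"
proof (cases "d = 0")
  case False
  have "(2 * n) div d = 2 * (n div d) + (2 * (n mod d)) div d"
    using div_add1_eq[of n n d] by (simp add: mult_2)
  moreover have "(2 * (n mod d)) div d < 2"
    using False by (simp add: div_less_iff_less_mult)
  ultimately show ?thesis by simp
qed simp

lemma ln_central_binomial_le_primes_psi: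
  "ln (real ((2 * n) choose n)) \<le> primes_psi (2 * n)"
proof -
  have "(fact (2 * n) :: real) = fact n * fact n * real ((2 * n) choose n)"
    using binomial_fact_lemma[of n "2 * n"] by (metis mult_2 diff_add_inverse2 le_add2 of_nat_fact of_nat_mult)
  then have "ln (real ((2 * n) choose n)) = ln (fact (2 * n)) - 2 * ln (fact n :: real)"
    by (simp add: ln_mult)
  also have "2 * ln (fact n :: real) = (\<Sum>d\<in>{1..2 * n}. mangoldt d * (2 * real (n div d)))"
  proof -
    have "(\<Sum>d\<in>{1..2 * n}. mangoldt d * (2 * real (n div d))) =
          (\<Sum>d\<in>{1..n}. mangoldt d * (2 * real (n div d)))"
      by (rule sum.mono_neutral_right) auto
    then show ?thesis by (simp add: ln_fact_conv_sum_mangoldt sum_distrib_left mult_ac)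
  qed
  also have "ln (fact (2 * n) :: real) - (\<Sum>d\<in>{1..2 * n}. mangoldt d * (2 * real (n div d)))
      = (\<Sum>d\<in>{1..2 * n}. mangoldt d * (real ((2 * n) div d) - 2 * real (n div d)))"
    by (simp add: ln_fact_conv_sum_mangoldt sum_subtractf algebra_simps)
  also have "\<dots> \<le> (\<Sum>d\<in>{1..2 * n}. mangoldt d)"
  proof (rule sum_mono)
    fix d
    have "real ((2 * n) div d) \<le> 2 * real (n div d) + 1"
      using two_mult_div_le[of n d] by linarith
    then show "mangoldt d * (real ((2 * n) div d) - 2 * real (n div d)) \<le> mangoldt d"
      using mangoldt_nonneg[of d] by (simp add: mult_left_le)
  qed
  finally show ?thesis by (simp add: primes_psi_def)
qed

lemma exponent_le_of_power_le:
  fixes p k X :: nat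
  assumes "2 \<le> p" "p ^ k \<le> X"
  shows "k \<le> X"
proof -
  have "k < 2 ^ k" by (rule less_exp)
  also have "\<dots> \<le> p ^ k" using assms(1) by (rule power_mono) simp
  finally show ?thesis using assms(2) by simp
qed

lemma prime_power_card_exponents_le:
  fixes p X :: nat
  assumes "prime p" "1 \<le> X"
  shows "p ^ card {k. 0 < k \<and> p ^ k \<le> X} \<le> X"
proof -
  let ?K = "{k. 0 < k \<and> p ^ k \<le> X}"
  have p2: "2 \<le> p" using assms prime_ge_2_nat by blast
  have "?K \<subseteq> {..X}"
    using p2 exponent_le_of_power_le by blast
  then have fin: "finite ?K" by (rule finite_subset) simp
  show ?thesis
  proof (cases "?K = {}")
    case False
    have "?K \<subseteq> {1..Max ?K}" using fin by (auto intro: Max_ge)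
    then have "card ?K \<le> Max ?K" using card_mono[of "{1..Max ?K}" ?K] by simp
    then have "p ^ card ?K \<le> p ^ Max ?K" using p2 by (intro power_increasing) auto
    also have "\<dots> \<le> X" using Max_in[OF fin False] by simp
    finally show ?thesis .
  next
    case True
    then have "card ?K = 0" by (simp only: card.empty)
    then show ?thesis using assms by simp
  qed
qed

lemma sum_mangoldt_powers_of_prime_le:
  fixes p X :: nat
  assumes "prime p" "1 \<le> X"
  shows "(\<Sum>d | d \<in> {1..X} \<and> primepow d \<and> aprimedivisor d = p. mangoldt d :: real) \<le> ln (real X)"
proof -
  let ?D = "{d. d \<in> {1..X} \<and> primepow d \<and> aprimedivisor d = p}"
  let ?K = "{k. 0 < k \<and> p ^ k \<le> X}"
  have p2: "2 \<le> p" using assms prime_ge_2_nat by blast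
  have "?D \<subseteq> (\<lambda>k. p ^ k) ` ?K"
  proof
    fix d assume d: "d \<in> ?D"
    then have "p ^ multiplicity p d = d" using primepow_decompose[of d] by auto
    moreover have "d \<noteq> 1" using d by auto
    ultimately show "d \<in> (\<lambda>k. p ^ k) ` ?K"
      using d by (intro image_eqI[of _ _ "multiplicity p d"]) (auto intro: Nat.gr0I)
  qed
  moreover have "?K \<subseteq> {..X}"
    using p2 exponent_le_of_power_le by blast
  then have "finite ?K" by (rule finite_subset) simp
  ultimately have "card ?D \<le> card ?K" by (meson card_image_le finite_imageI card_mono le_trans)
  have "(\<Sum>d\<in>?D. mangoldt d :: real) = real (card ?D) * ln (real p)"
    using assms(1) by (simp add: mangoldt_def)
  also have "\<dots> \<le> real (card ?K) * ln (real p)"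
    using \<open>card ?D \<le> card ?K\<close> p2 by (intro mult_right_mono) auto
  also have "\<dots> = ln (real (p ^ card ?K))" using p2 by (simp add: ln_realpow)
  also have "\<dots> \<le> ln (real X)"
    using prime_power_card_exponents_le[OF assms] p2 assms(2) by (subst ln_le_cancel_iff) auto
  finally show ?thesis .
qed

lemma primes_psi_le:
  assumes "1 \<le> X"
  shows "primes_psi X \<le> real (card {p. prime p \<and> p \<le> X}) * ln (real X)"
proof -
  let ?D = "{d\<in>{1..X}. primepow d}"
  let ?T = "{p. prime p \<and> p \<le> X}"
  have "finite ?T" by (rule finite_subset[of _ "{..X}"]) auto
  have "primes_psi X = (\<Sum>d\<in>?D. mangoldt d)"
    unfolding primes_psi_def by (rule sum.mono_neutral_right) (auto simp: mangoldt_def)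
  also have "\<dots> = (\<Sum>p\<in>?T. \<Sum>d | d \<in> ?D \<and> aprimedivisor d = p. mangoldt d)"
  proof (rule sum.group[symmetric])
    show "aprimedivisor ` ?D \<subseteq> ?T"
    proof clarify
      fix d assume "d \<in> {1..X}" "primepow d"
      then show "prime (aprimedivisor d) \<and> aprimedivisor d \<le> X"
        using aprimedivisor_nat[of d] aprimedivisor_le_nat[of d] primepow_gt_Suc_0[of d] by auto
    qed
  qed (use \<open>finite ?T\<close> in auto)
  also have "\<dots> \<le> (\<Sum>p\<in>?T. ln (real X))"
  proof (rule sum_mono)
    fix p assume "p \<in> ?T"
    then have "(\<Sum>d | d \<in> {1..X} \<and> primepow d \<and> aprimedivisor d = p. mangoldt d) \<le> ln (real X)"
      using sum_mangoldt_powers_of_prime_le assms by blast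
    then show "(\<Sum>d | d \<in> ?D \<and> aprimedivisor d = p. mangoldt d) \<le> ln (real X)"
      by (simp add: conj_assoc)
  qed
  finally show ?thesis by simp
qed
lemma card_primes_ge:
  assumes "2 \<le> X"
  shows "(real (X div 2) * ln 4 - ln (real X)) / ln (real X) \<le> real (card {p. prime p \<and> p \<le> X})"
proof -
  define n where "n = X div 2"
  have "0 < n" "2 * n \<le> X" using assms unfolding n_def by auto
  have "ln (4 ^ n / (2 * real n)) \<le> ln (real ((2 * n) choose n))"
    using central_binomial_lower_bound[OF \<open>0 < n\<close>] \<open>0 < n\<close> by (subst ln_le_cancel_iff) auto
  also have "\<dots> \<le> primes_psi (2 * n)" by (rule ln_central_binomial_le_primes_psi)
  also have "\<dots> \<le> primes_psi X" using \<open>2 * n \<le> X\<close> by (rule primes_psi_mono)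
  also have "\<dots> \<le> real (card {p. prime p \<and> p \<le> X}) * ln (real X)"
    using assms by (intro primes_psi_le) simp
  finally have "ln (4 ^ n / (2 * real n)) \<le> real (card {p. prime p \<and> p \<le> X}) * ln (real X)" .
  moreover have "ln (4 ^ n / (2 * real n)) = real n * ln 4 - ln (2 * real n)"
    using \<open>0 < n\<close> by (simp add: ln_div ln_realpow)
  moreover have "ln (2 * real n) \<le> ln (real X)"
    using \<open>0 < n\<close> \<open>2 * n \<le> X\<close> by (subst ln_le_cancel_iff) auto
  moreover have "0 < ln (real X)" using assms by simp
  ultimately show ?thesis unfolding n_def by (simp add: divide_le_eq)
qed

lemma card_primes_real_ge:
  fixes x :: real
  assumes "2 \<le> x"
  shows "(x / 2 - 1 - ln x) / ln x \<le> real (card {p. prime p \<and> real p \<le> x})"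
proof -
  define X where "X = nat \<lfloor>x\<rfloor>"
  have "2 \<le> X" "real X \<le> x" "x - 1 \<le> real X"
    using assms unfolding X_def by (simp_all add: le_nat_iff of_nat_nat)
  have "0 < ln (real X)" "ln (real X) \<le> ln x"
    using \<open>2 \<le> X\<close> \<open>real X \<le> x\<close> by auto
  have "1 \<le> ln (4::real)"
    using ln_exp[of 1] ln_le_cancel_iff[of "exp 1" 4] exp_le by simp
  then have "x / 2 - 1 \<le> real (X div 2) * ln 4"
    using \<open>x - 1 \<le> real X\<close> mult_left_mono[of 1 "ln 4" "real (X div 2)"] by linarith
  have "0 < ln x" using assms by simp
  have "(x / 2 - 1 - ln x) / ln x = (x / 2 - 1) / ln x - 1"
    using \<open>0 < ln x\<close> by (simp add: field_simps)
  also have "\<dots> \<le> real (X div 2) * ln 4 / ln x - 1"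
    using \<open>x / 2 - 1 \<le> real (X div 2) * ln 4\<close> \<open>0 < ln x\<close> by (simp add: divide_right_mono)
  also have "\<dots> \<le> real (X div 2) * ln 4 / ln (real X) - 1"
    using \<open>0 < ln (real X)\<close> \<open>ln (real X) \<le> ln x\<close> \<open>1 \<le> ln 4\<close>
    by (intro diff_right_mono divide_left_mono) auto
  also have "\<dots> = (real (X div 2) * ln 4 - ln (real X)) / ln (real X)"
    using \<open>0 < ln (real X)\<close> by (simp add: field_simps)
  also have "\<dots> \<le> real (card {p. prime p \<and> p \<le> X})" by (rule card_primes_ge[OF \<open>2 \<le> X\<close>])
  also have "{p. prime p \<and> p \<le> X} = {p. prime p \<and> real p \<le> x}"
  proof -
    have "p \<le> X \<longleftrightarrow> real p \<le> x" for p
      using \<open>real X \<le> x\<close> le_nat_floor[of p x] unfolding X_def by (auto intro: order_trans)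
    then show ?thesis by auto
  qed
  finally show ?thesis .
qed
section \<open>A weak form of Mertens' product theorem\<close>

definition smooth_numbers :: "nat set \<Rightarrow> nat \<Rightarrow> nat set" where
  "smooth_numbers A M = {n \<in> {1..M}. \<forall>q. prime q \<and> q dvd n \<longrightarrow> q \<in> A}"

lemma smooth_numbers_empty_subset: "smooth_numbers {} M \<subseteq> {1}"
  unfolding smooth_numbers_def using prime_factor_nat by fastforce

lemma smooth_numbers_insert_subset:
  assumes "prime q"
  shows "smooth_numbers (insert q A) M \<subseteq> (\<lambda>(k, m). q ^ k * m) ` ({..M} \<times> smooth_numbers A M)"
proof
  fix n assume n: "n \<in> smooth_numbers (insert q A) M"
  then have "1 \<le> n" "n \<le> M" and n_smooth: "\<forall>s. prime s \<and> s dvd n \<longrightarrow> s \<in> insert q A"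
    by (auto simp: smooth_numbers_def)
  define k where "k = multiplicity q n"
  define m where "m = n div q ^ k"
  have "q ^ k dvd n" unfolding k_def by (rule multiplicity_dvd)
  then have nm: "n = q ^ k * m" unfolding m_def by simp
  have "\<not> q dvd m"
    unfolding m_def k_def using multiplicity_decompose[of n q] prime_ge_2_nat[OF assms] \<open>1 \<le> n\<close> by simp
  have "k \<le> M"
    using exponent_le_of_power_le[of q k n] prime_ge_2_nat[OF assms] \<open>q ^ k dvd n\<close> \<open>1 \<le> n\<close> \<open>n \<le> M\<close>
    by (auto dest: dvd_imp_le)
  have "m \<in> smooth_numbers A M"
    unfolding smooth_numbers_def
  proof (intro CollectI conjI allI impI)
    have "m \<le> n" using \<open>1 \<le> n\<close> prime_gt_0_nat[OF assms] by (intro dvd_imp_le) (auto simp: nm)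
    moreover have "m \<noteq> 0" using nm \<open>1 \<le> n\<close> by auto
    ultimately show "m \<in> {1..M}" using \<open>n \<le> M\<close> by auto
  next
    fix s assume s: "prime s \<and> s dvd m"
    then have "s \<in> insert q A" using n_smooth nm by auto
    moreover have "s \<noteq> q" using s \<open>\<not> q dvd m\<close> by blast
    ultimately show "s \<in> A" by simp
  qed
  then show "n \<in> (\<lambda>(k, m). q ^ k * m) ` ({..M} \<times> smooth_numbers A M)"
    using \<open>k \<le> M\<close> nm by (intro image_eqI[of _ _ "(k, m)"]) auto
qed

lemma sum_power_inverse_le:
  assumes "2 \<le> (q::nat)"
  shows "(\<Sum>k\<le>M. (1 / real q) ^ k) \<le> real q / (real q - 1)"
proof -
  have "(1 - 1 / real q) * (\<Sum>k<Suc M. (1 / real q) ^ k) = 1 - (1 / real q) ^ Suc M"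
    by (rule one_diff_power_eq[symmetric])
  also have "\<dots> \<le> 1" by simp
  finally have "(1 - 1 / real q) * (\<Sum>k\<le>M. (1 / real q) ^ k) \<le> 1"
    by (simp add: lessThan_Suc_atMost)
  moreover have "0 < 1 - 1 / real q" using assms by (simp add: field_simps)
  ultimately show ?thesis using assms by (simp add: field_simps mult.commute)
qed

lemma sum_inverse_smooth_numbers_le:
  assumes "finite A" "\<forall>p\<in>A. prime p"
  shows "(\<Sum>n\<in>smooth_numbers A M. 1 / real n) \<le> (\<Prod>p\<in>A. real p / (real p - 1))"
  using assms
proof (induction A rule: finite_induct)
  case empty
  then show ?case using sum_mono2[OF _ smooth_numbers_empty_subset, where f = "\<lambda>n. 1 / real n"] by simp
next
  case (insert q A)
  have "prime q" "2 \<le> q" using insert prime_ge_2_nat by auto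
  let ?g = "\<lambda>(k, m). q ^ k * m"
  have fin: "finite (smooth_numbers A M)" unfolding smooth_numbers_def by simp
  have "(\<Sum>n\<in>smooth_numbers (insert q A) M. 1 / real n)
      \<le> (\<Sum>n\<in>?g ` ({..M} \<times> smooth_numbers A M). 1 / real n)"
    using smooth_numbers_insert_subset[OF \<open>prime q\<close>] fin by (intro sum_mono2) auto
  also have "\<dots> \<le> (\<Sum>x\<in>{..M} \<times> smooth_numbers A M. ((\<lambda>n. 1 / real n) \<circ> ?g) x)"
    using fin by (intro sum_image_le) auto
  also have "\<dots> = (\<Sum>(k, m)\<in>{..M} \<times> smooth_numbers A M. (1 / real q) ^ k * (1 / real m))"
    by (intro sum.cong refl) (auto simp: power_one_over)
  also have "\<dots> = (\<Sum>k\<le>M. (1 / real q) ^ k) * (\<Sum>m\<in>smooth_numbers A M. 1 / real m)"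
    by (simp add: sum.cartesian_product[symmetric] sum_product)
  also have "\<dots> \<le> (real q / (real q - 1)) * (\<Prod>p\<in>A. real p / (real p - 1))"
    using insert sum_power_inverse_le[OF \<open>2 \<le> q\<close>] \<open>2 \<le> q\<close>
    by (intro mult_mono sum_nonneg) auto
  also have "\<dots> = (\<Prod>p\<in>insert q A. real p / (real p - 1))"
    using insert by simp
  finally show ?case .
qed

lemma prod_primes_one_minus_inverse_le:
  assumes "1 \<le> z"
  shows "(\<Prod>p | prime p \<and> p \<le> z. (real p - 1) / real p) \<le> 1 / ln (real z + 1)"
proof -
  let ?A = "{p. prime p \<and> p \<le> z}"
  have "finite ?A" by (rule finite_subset[of _ "{..z}"]) auto
  have "smooth_numbers ?A z = {1..z}"
    unfolding smooth_numbers_def by (auto dest: dvd_imp_le)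
  then have "harm z \<le> (\<Prod>p\<in>?A. real p / (real p - 1))"
    using sum_inverse_smooth_numbers_le[OF \<open>finite ?A\<close>, of z]
    unfolding harm_def by (simp add: divide_inverse)
  then have "ln (real z + 1) \<le> (\<Prod>p\<in>?A. real p / (real p - 1))"
    using ln_le_harm[of z] by linarith
  also have "(\<Prod>p\<in>?A. real p / (real p - 1)) = (\<Prod>p\<in>?A. 1 / ((real p - 1) / real p))"
    by simp
  also have "\<dots> = 1 / (\<Prod>p\<in>?A. (real p - 1) / real p)"
    by (simp add: prod_dividef)
  finally have "ln (real z + 1) \<le> 1 / (\<Prod>p\<in>?A. (real p - 1) / real p)" .
  moreover have "0 < (\<Prod>p\<in>?A. (real p - 1) / real p)"
    by (rule prod_pos) (auto dest: prime_ge_2_nat)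
  moreover have "0 < ln (real z + 1)" using assms by simp
  ultimately show ?thesis by (simp add: field_simps)
qed
section \<open>Covering targets by residue classes\<close>

lemma finite_nat_le_real: "finite {n::nat. real n \<le> x}"
  by (rule finite_subset[of _ "{..nat \<lfloor>x\<rfloor>}"]) (auto intro: le_nat_floor)

lemma exists_le_average:
  fixes f :: "'a \<Rightarrow> real"
  assumes "finite R" "R \<noteq> {}" "(\<Sum>r\<in>R. f r) \<le> real (card R) * a"
  shows "\<exists>r\<in>R. f r \<le> a"
proof (rule ccontr)
  assume "\<not> ?thesis"
  then have "(\<Sum>r\<in>R. a) < (\<Sum>r\<in>R. f r)"
    using assms(1,2) by (intro sum_strict_mono) (auto simp: not_le)
  with assms(3) show False by simp
qed

lemma sum_card_uncovered:
  fixes A :: "nat set" and P :: "'u set" and c :: "'u \<Rightarrow> nat \<Rightarrow> nat"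
  assumes "finite A" "finite P" "\<forall>u\<in>P. \<forall>p\<in>A. c u p < p"
  shows "(\<Sum>r\<in>PiE A (\<lambda>p. {..<p}). card {u\<in>P. \<forall>p\<in>A. r p \<noteq> c u p}) = card P * (\<Prod>p\<in>A. p - 1)"
proof -
  let ?R = "PiE A (\<lambda>p. {..<p})"
  let ?Q = "\<lambda>r u. \<forall>p\<in>A. r p \<noteq> c u p"
  have card_filter: "card {v\<in>V. Q v} = (\<Sum>v\<in>V. if Q v then 1 else 0)" if "finite V" for V Q
    using that by (subst card_eq_sum) (rule sum.inter_filter)
  have card_avoiding: "card {r\<in>?R. ?Q r u} = (\<Prod>p\<in>A. p - 1)" if "u \<in> P" for u
  proof -
    have "{r\<in>?R. ?Q r u} = PiE A (\<lambda>p. {..<p} - {c u p})"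
      by (auto simp: PiE_iff extensional_def)
    then have "card {r\<in>?R. ?Q r u} = (\<Prod>p\<in>A. card ({..<p} - {c u p}))"
      using assms(1) by (simp add: card_PiE)
    also have "\<dots> = (\<Prod>p\<in>A. p - 1)"
      using assms(3) that by (intro prod.cong refl) auto
    finally show ?thesis .
  qed
  have "finite ?R" using assms(1) by (intro finite_PiE) auto
  have "(\<Sum>r\<in>?R. card {u\<in>P. ?Q r u}) = (\<Sum>r\<in>?R. \<Sum>u\<in>P. if ?Q r u then 1 else 0)"
    using assms(2) by (intro sum.cong refl card_filter)
  also have "\<dots> = (\<Sum>u\<in>P. \<Sum>r\<in>?R. if ?Q r u then 1 else 0)" by (rule sum.swap)
  also have "\<dots> = (\<Sum>u\<in>P. card {r\<in>?R. ?Q r u})"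
    using \<open>finite ?R\<close> by (intro sum.cong refl card_filter[symmetric])
  also have "\<dots> = card P * (\<Prod>p\<in>A. p - 1)" using card_avoiding by simp
  finally show ?thesis .
qed

text \<open>Averaging over all choices of residues: each \<open>u\<close> avoids the forbidden residue \<open>c u p\<close> for
  every \<open>p \<in> A\<close> in a fraction \<open>\<Prod>(1 - 1/p)\<close> of the choices.\<close>
lemma exists_residues_few_uncovered:
  fixes A :: "nat set" and P :: "'u set" and c :: "'u \<Rightarrow> nat \<Rightarrow> nat"
  assumes "finite A" "finite P" "\<forall>p\<in>A. 0 < p" "\<forall>u\<in>P. \<forall>p\<in>A. c u p < p"
  shows "\<exists>r\<in>PiE A (\<lambda>p. {..<p}).
    real (card {u\<in>P. \<forall>p\<in>A. r p \<noteq> c u p}) \<le> real (card P) * (\<Prod>p\<in>A. (real p - 1) / real p)"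
proof (rule exists_le_average)
  let ?R = "PiE A (\<lambda>p. {..<p})"
  show "finite ?R" using assms(1) by (intro finite_PiE) auto
  show "?R \<noteq> {}" using assms(3) by (auto simp: PiE_eq_empty_iff)
  have "real (card ?R) * (\<Prod>p\<in>A. (real p - 1) / real p) = (\<Prod>p\<in>A. real (p - 1))"
    using assms(1,3) by (simp add: card_PiE prod.distrib[symmetric] of_nat_diff Suc_le_eq)
  then show "(\<Sum>r\<in>?R. real (card {u\<in>P. \<forall>p\<in>A. r p \<noteq> c u p}))
      \<le> real (card ?R) * (real (card P) * (\<Prod>p\<in>A. (real p - 1) / real p))"
    using sum_card_uncovered[OF assms(1,2,4)] by (simp flip: of_nat_sum add: mult_ac)
qed

lemma chinese_remainder_primes_int:
  fixes Q :: "nat set" and a :: "nat \<Rightarrow> int"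
  assumes "finite Q" "\<forall>p\<in>Q. prime p"
  shows "\<exists>b. \<forall>p\<in>Q. [b = a p] (mod int p)"
proof -
  obtain b where b: "\<forall>p\<in>Q. [b = nat (a p mod int p)] (mod id p)"
    using chinese_remainder_nat[OF assms(1), of id "\<lambda>p. nat (a p mod int p)"] assms(2)
    by (auto simp: primes_coprime)
  have "[int b = a p] (mod int p)" if "p \<in> Q" for p
  proof -
    have "[int b = int (nat (a p mod int p))] (mod int p)"
      using b that by (simp only: cong_int_iff id_apply)
    moreover have "int (nat (a p mod int p)) = a p mod int p"
      using assms(2) that prime_gt_0_nat by simp
    ultimately show ?thesis by simp
  qed
  then show ?thesis by blast
qed
lemma exists_covering_residue:
  fixes T :: "int set" and z :: nat and x :: real
  assumes "finite T" "1 \<le> z" "real z \<le> x"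
    and few: "real (card T) / ln (real z + 1) \<le> real (card {p. prime p \<and> z < p \<and> real p \<le> x})"
  shows "\<exists>b. \<forall>t\<in>T. \<exists>p. prime p \<and> real p \<le> x \<and> [b = t] (mod int p)"
proof -
  define A where "A = {p. prime p \<and> p \<le> z}"
  define B where "B = {p. prime p \<and> z < p \<and> real p \<le> x}"
  define c where "c t p = nat (t mod int p)" for t :: int and p :: nat
  have "finite A" unfolding A_def by (rule finite_subset[of _ "{..z}"]) auto
  have "finite B" unfolding B_def by (rule finite_subset[OF _ finite_nat_le_real]) auto
  have A_pos: "\<forall>p\<in>A. 0 < p" unfolding A_def by (auto dest: prime_gt_0_nat)
  then have "\<forall>t\<in>T. \<forall>p\<in>A. c t p < p" unfolding c_def by (auto simp: nat_less_iff)
  then obtain r where few_uncovered: "real (card {t\<in>T. \<forall>p\<in>A. r p \<noteq> c t p})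
      \<le> real (card T) * (\<Prod>p\<in>A. (real p - 1) / real p)"
    using exists_residues_few_uncovered[OF \<open>finite A\<close> \<open>finite T\<close> A_pos] by blast
  define U where "U = {t\<in>T. \<forall>p\<in>A. r p \<noteq> c t p}"
  have "real (card T) * (\<Prod>p\<in>A. (real p - 1) / real p) \<le> real (card T) * (1 / ln (real z + 1))"
    using prod_primes_one_minus_inverse_le[OF \<open>1 \<le> z\<close>] unfolding A_def by (intro mult_left_mono) auto
  then have "card U \<le> card B" using few_uncovered few unfolding U_def B_def by simp
  moreover have "finite U" unfolding U_def using \<open>finite T\<close> by simp
  ultimately obtain f where "f ` U \<subseteq> B" "inj_on f U"
    using card_le_inj[OF _ \<open>finite B\<close>] by blast
  \<comment> \<open>each uncovered target \<open>t\<close> is assigned to its own large prime \<open>f t\<close>\<close>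
  define a where "a p = (if p \<in> A then int (r p) else inv_into U f p)" for p
  have "\<forall>p\<in>A \<union> f ` U. prime p" using \<open>f ` U \<subseteq> B\<close> unfolding A_def B_def by auto
  then obtain b where b: "\<forall>p\<in>A \<union> f ` U. [b = a p] (mod int p)"
    using chinese_remainder_primes_int[of "A \<union> f ` U" a] \<open>finite A\<close> \<open>finite U\<close> by blast
  have "\<exists>p. prime p \<and> real p \<le> x \<and> [b = t] (mod int p)" if "t \<in> T" for t
  proof (cases "t \<in> U")
    case True
    then have "f t \<in> B" "f t \<notin> A" using \<open>f ` U \<subseteq> B\<close> unfolding A_def B_def by auto
    moreover have "a (f t) = t" using \<open>inj_on f U\<close> True \<open>f t \<notin> A\<close> unfolding a_def by simp
    moreover have "[b = a (f t)] (mod int (f t))" using b True by blast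
    ultimately show ?thesis unfolding B_def by auto
  next
    case False
    obtain p where "p \<in> A" "r p = c t p" using False \<open>t \<in> T\<close> unfolding U_def by auto
    then have "a p = t mod int p" using A_pos unfolding a_def c_def by simp
    moreover have "[b = a p] (mod int p)" using b \<open>p \<in> A\<close> by blast
    ultimately have "[b = t] (mod int p)" by simp
    moreover have "prime p" "real p \<le> x" using \<open>p \<in> A\<close> \<open>real z \<le> x\<close> unfolding A_def by auto
    ultimately show ?thesis by blast
  qed
  then show ?thesis by blast
qed

lemma shift_sieved_Int_eq_empty_iff:
  "shift (sieved x) b \<inter> I = {} \<longleftrightarrow> (\<forall>m\<in>I. \<exists>p. prime p \<and> real p \<le> x \<and> int p dvd m + b)"
proof -
  have "m \<in> shift (sieved x) b \<longleftrightarrow> m + b \<in> sieved x" for m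
    unfolding shift_def by (auto intro: image_eqI[of _ _ "m + b"])
  then show ?thesis unfolding sieved_def by auto
qed

lemma exists_shift_sieved_avoiding_pair:
  fixes x :: real and z :: nat and y N :: int
  assumes "1 \<le> z" "real z \<le> x" "0 \<le> y"
    and "(4 * real_of_int y + 2) / ln (real z + 1) \<le> real (card {p. prime p \<and> z < p \<and> real p \<le> x})"
  shows "\<exists>b. shift (sieved x) b \<inter> {-y..y} = {} \<and> shift (sieved x) (N - b) \<inter> {-y..y} = {}"
proof -
  define T where "T = uminus ` {-y..y} \<union> (\<lambda>m. N + m) ` {-y..y}"
  have "card T \<le> card {-y..y} + card {-y..y}"
    unfolding T_def by (intro order_trans[OF card_Un_le] add_mono card_image_le) auto
  then have "real (card T) \<le> 4 * real_of_int y + 2" using \<open>0 \<le> y\<close> by simp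
  then have "real (card T) / ln (real z + 1) \<le> (4 * real_of_int y + 2) / ln (real z + 1)"
    using \<open>1 \<le> z\<close> by (intro divide_right_mono) auto
  moreover have "finite T" unfolding T_def by simp
  ultimately obtain b where b: "\<forall>t\<in>T. \<exists>p. prime p \<and> real p \<le> x \<and> int p dvd b - t"
    using exists_covering_residue[of T z x] assms by (auto simp: cong_iff_dvd_diff)
  have "\<exists>p. prime p \<and> real p \<le> x \<and> int p dvd m + b" if "m \<in> {-y..y}" for m
  proof -
    have "- m \<in> T" using that unfolding T_def by auto
    then obtain p where "prime p" "real p \<le> x" "int p dvd b - - m" using b by blast
    then show ?thesis by (auto simp: add.commute)
  qed
  moreover have "\<exists>p. prime p \<and> real p \<le> x \<and> int p dvd m + (N - b)" if "m \<in> {-y..y}" for m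
  proof -
    have "N + m \<in> T" using that unfolding T_def by auto
    then obtain p where "prime p" "real p \<le> x" "int p dvd b - (N + m)" using b by blast
    moreover have "m + (N - b) = - (b - (N + m))" by simp
    ultimately show ?thesis by (metis dvd_minus_iff)
  qed
  ultimately show ?thesis unfolding shift_sieved_Int_eq_empty_iff by blast
qed

section \<open>Primes between \<open>x powr 0.9\<close> and \<open>x\<close>\<close>

lemma card_primes_le_add:
  fixes x :: real
  shows "card {p. prime p \<and> real p \<le> x} \<le> card {p. prime p \<and> z < p \<and> real p \<le> x} + z"
proof -
  have "finite {p. prime p \<and> z < p \<and> real p \<le> x}"
    by (rule finite_subset[OF _ finite_nat_le_real]) auto
  then have "card {p. prime p \<and> real p \<le> x}
      \<le> card ({p. prime p \<and> z < p \<and> real p \<le> x} \<union> {p. prime p \<and> p \<le> z})"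
    by (intro card_mono) (auto simp: not_less)
  also have "\<dots> \<le> card {p. prime p \<and> z < p \<and> real p \<le> x} + card {p. prime p \<and> p \<le> z}"
    by (rule card_Un_le)
  also have "card {p. prime p \<and> p \<le> z} \<le> card {1..z}"
    by (intro card_mono) (auto dest: prime_gt_0_nat)
  finally show ?thesis by simp
qed

lemma eventually_many_large_primes:
  "\<forall>\<^sub>F x in at_top. (4 * real_of_int \<lfloor>0.08 * x\<rfloor> + 2) / ln (real (nat \<lfloor>x powr 0.9\<rfloor>) + 1)
      \<le> real (card {p. prime p \<and> nat \<lfloor>x powr 0.9\<rfloor> < p \<and> real p \<le> x})"
proof -
  have "\<forall>\<^sub>F x::real in at_top. (0.32 * x + 2) / (0.9 * ln x) + x powr 0.9 \<le> (x / 2 - 1 - ln x) / ln x"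
    by real_asymp
  then show ?thesis using eventually_ge_at_top[of 2]
  proof eventually_elim
    case (elim x)
    define z where "z = nat \<lfloor>x powr 0.9\<rfloor>"
    have "1 \<le> x powr 0.9" using elim by (intro ge_one_powr_ge_zero) auto
    then have "real z \<le> x powr 0.9" "x powr 0.9 \<le> real z + 1"
      unfolding z_def by (simp_all add: of_nat_nat)
    have "0.9 * ln x = ln (x powr 0.9)" using elim by (simp add: ln_powr)
    also have "\<dots> \<le> ln (real z + 1)"
      using \<open>1 \<le> x powr 0.9\<close> \<open>x powr 0.9 \<le> real z + 1\<close> by (subst ln_le_cancel_iff) auto
    finally have "(4 * real_of_int \<lfloor>0.08 * x\<rfloor> + 2) / ln (real z + 1) \<le> (0.32 * x + 2) / (0.9 * ln x)"
      using elim of_int_floor_le[of "0.08 * x"] by (intro frac_le) auto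
    also have "\<dots> \<le> (x / 2 - 1 - ln x) / ln x - real z"
      using elim \<open>real z \<le> x powr 0.9\<close> by linarith
    also have "\<dots> \<le> real (card {p. prime p \<and> real p \<le> x}) - real z"
      using card_primes_real_ge[of x] elim by simp
    also have "\<dots> \<le> real (card {p. prime p \<and> z < p \<and> real p \<le> x})"
      using card_primes_le_add[of x z] by linarith
    finally show ?case unfolding z_def .
  qed
qed

theorem mainTheorem3:
  shows "\<exists>x0::real. \<forall>x\<ge>x0. \<forall>N::int.
    \<exists>b::int.
      shift (sieved x) b \<inter> {-\<lfloor>0.08 * x\<rfloor>..\<lfloor>0.08 * x\<rfloor>} = {} \<and>
      shift (sieved x) (N - b) \<inter> {-\<lfloor>0.08 * x\<rfloor>..\<lfloor>0.08 * x\<rfloor>} = {}"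
proof -
  obtain x0 where x0: "\<And>x. x0 \<le> x \<Longrightarrow> (4 * real_of_int \<lfloor>0.08 * x\<rfloor> + 2) / ln (real (nat \<lfloor>x powr 0.9\<rfloor>) + 1)
      \<le> real (card {p. prime p \<and> nat \<lfloor>x powr 0.9\<rfloor> < p \<and> real p \<le> x})"
    using eventually_many_large_primes unfolding eventually_at_top_linorder by blast
  have "\<exists>b. shift (sieved x) b \<inter> {-\<lfloor>0.08 * x\<rfloor>..\<lfloor>0.08 * x\<rfloor>} = {} \<and>
      shift (sieved x) (N - b) \<inter> {-\<lfloor>0.08 * x\<rfloor>..\<lfloor>0.08 * x\<rfloor>} = {}" if "max x0 1 \<le> x" for x N
  proof (rule exists_shift_sieved_avoiding_pair)
    have "1 \<le> x powr 0.9" using that by (intro ge_one_powr_ge_zero) auto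
    then have "1 \<le> nat \<lfloor>x powr 0.9\<rfloor>" "real (nat \<lfloor>x powr 0.9\<rfloor>) \<le> x powr 0.9"
      by (simp_all add: le_nat_iff of_nat_nat)
    moreover have "x powr 0.9 \<le> x" using that powr_mono[of "0.9" 1 x] by simp
    ultimately show "1 \<le> nat \<lfloor>x powr 0.9\<rfloor>" "real (nat \<lfloor>x powr 0.9\<rfloor>) \<le> x" by linarith+
    show "0 \<le> \<lfloor>0.08 * x\<rfloor>" using that by simp
  qed (use x0 that in simp)
  then show ?thesis by blast
qed

end
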